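(* For every integer $\Delta\geq 1$, the symmetric directed star $\overleftrightarrow{K_{1,\Delta}}$ satisfies $$\chi'_{D_{1,2}}(\overleftrightarrow{K_{1,\Delta}}) = \left\lceil 2\sqrt{\Delta}\right\rceil.$$
   Context: For a simple graph $G$, the symmetric digraph $\overleftrightarrow{G}$ is obtained by replacing each edge $uv$ of $G$ by the pair of opposite arcs $\overrightarrow{uv}$ and $\overrightarrow{vu}$. An arc-colouring is proper of type I if any two consecutive arcs $\overrightarrow{uv},\overrightarrow{vw}$ (including $w=u$) receive distinct colours, i.e. no monochromatic 2-cycles and no monochromatic 2-paths. An arc-colouring is distinguishing if the only automorphism of $\overleftrightarrow{G}$ preserving the colour of every arc is the identity. $\chi'_{D_{1,2}}(\overleftrightarrow{G})$ is the least number of colours in a distinguishing proper arc-colouring of type I of $\overleftrightarrow{G}$. *)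

theory Defs
  imports Complex_Main
begin

text \<open>A finite simple graph is given by a vertex set V and an edge relation E
(symmetric, irreflexive, within V).\<close>

definition sym_arcs :: "'a set \<Rightarrow> ('a \<Rightarrow> 'a \<Rightarrow> bool) \<Rightarrow> ('a \<times> 'a) set" where
  "sym_arcs V E = {(u,v). u \<in> V \<and> v \<in> V \<and> E u v}"

definition digraph_aut :: "'a set \<Rightarrow> ('a \<times> 'a) set \<Rightarrow> ('a \<Rightarrow> 'a) \<Rightarrow> bool" where
  "digraph_aut V A f \<longleftrightarrow> bij_betw f V V \<and>
     (\<forall>u\<in>V. \<forall>v\<in>V. ((u,v) \<in> A \<longleftrightarrow> (f u, f v) \<in> A))"

definition proper_type_I :: "('a \<times> 'a) set \<Rightarrow> ('a \<times> 'a \<Rightarrow> nat) \<Rightarrow> bool" where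
  "proper_type_I A c \<longleftrightarrow> (\<forall>u v w. (u,v) \<in> A \<longrightarrow> (v,w) \<in> A \<longrightarrow> c (u,v) \<noteq> c (v,w))"

definition distinguishing :: "'a set \<Rightarrow> ('a \<times> 'a) set \<Rightarrow> ('a \<times> 'a \<Rightarrow> nat) \<Rightarrow> bool" where
  "distinguishing V A c \<longleftrightarrow>
     (\<forall>f. digraph_aut V A f \<and> (\<forall>a\<in>A. c (f (fst a), f (snd a)) = c a) \<longrightarrow> (\<forall>x\<in>V. f x = x))"

definition chi_D12 :: "'a set \<Rightarrow> ('a \<Rightarrow> 'a \<Rightarrow> bool) \<Rightarrow> nat" where
  "chi_D12 V E = (LEAST k. \<exists>c. (\<forall>a\<in>sym_arcs V E. c a < k) \<and>
       proper_type_I (sym_arcs V E) c \<and> distinguishing V (sym_arcs V E) c)"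

text \<open>The star K_{1,\<Delta>}: centre 0, leaves 1..\<Delta>.\<close>
definition star_V :: "nat \<Rightarrow> nat set" where
  "star_V d = {0..d}"

definition star_E :: "nat \<Rightarrow> nat \<Rightarrow> nat \<Rightarrow> bool" where
  "star_E d u v \<longleftrightarrow> (u = 0 \<and> 1 \<le> v \<and> v \<le> d) \<or> (v = 0 \<and> 1 \<le> u \<and> u \<le> d)"

end

theory Submission
  imports Defs "HOL-Combinatorics.Transposition"
begin

text \<open>
In a type I proper colouring of the star, no colour appears both on an arc leaving
the centre and on an arc entering it, so with k colours the leaves see at most
p out-colours and q in-colours with p + q \<le> k. Two leaves carrying the same pair
(out-colour, in-colour) could be swapped by a colour-preserving automorphism, so a
distinguishing colouring needs \<Delta> \<le> p q \<le> k^2/4. Conversely, if \<Delta> \<le> a b, colour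
the arcs at leaf v by the two base-a digits of v - 1, using a colours for out-arcs
and b further colours for in-arcs.
\<close>

definition D12_colouring :: "'a set \<Rightarrow> ('a \<Rightarrow> 'a \<Rightarrow> bool) \<Rightarrow> nat \<Rightarrow> ('a \<times> 'a \<Rightarrow> nat) \<Rightarrow> bool" where
  "D12_colouring V E k c \<longleftrightarrow> (\<forall>a\<in>sym_arcs V E. c a < k) \<and>
     proper_type_I (sym_arcs V E) c \<and> distinguishing V (sym_arcs V E) c"

lemma chi_D12_eq_Least: "chi_D12 V E = (LEAST k. \<exists>c. D12_colouring V E k c)"
  unfolding chi_D12_def D12_colouring_def ..

lemma sym_arcs_star_iff:
  "(u, v) \<in> sym_arcs (star_V d) (star_E d) \<longleftrightarrow>
     (u = 0 \<and> v \<in> {1..d}) \<or> (v = 0 \<and> u \<in> {1..d})"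
  unfolding sym_arcs_def star_V_def star_E_def by auto

lemma four_mul_le_square_sum: "4 * (x * y) \<le> (x + y)\<^sup>2" for x y :: nat
proof -
  have "int (4 * (x * y)) \<le> int ((x + y)\<^sup>2)"
    using zero_le_power2[of "int x - int y"] by (simp add: power2_eq_square algebra_simps)
  then show ?thesis by linarith
qed

lemma ceiling_two_sqrt_le_iff: "\<lceil>2 * sqrt (real d)\<rceil> \<le> int k \<longleftrightarrow> 4 * d \<le> k\<^sup>2"
proof -
  have "\<lceil>2 * sqrt (real d)\<rceil> \<le> int k \<longleftrightarrow> sqrt (real (4 * d)) \<le> real k"
    by (simp add: ceiling_le_iff real_sqrt_mult)
  also have "\<dots> \<longleftrightarrow> real (4 * d) \<le> (real k)\<^sup>2"
    using real_le_lsqrt sqrt_le_D by fastforce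
  finally show ?thesis
    by (metis of_nat_le_iff of_nat_power)
qed

lemma Least_int_le_eq_nat: "(LEAST k. z \<le> int k) = nat z"
  by (rule Least_equality) (simp_all add: nat_le_iff)

lemma star_out_in_colours_disjoint:
  assumes "proper_type_I (sym_arcs (star_V d) (star_E d)) c"
  shows "(\<lambda>i. c (0, i)) ` {1..d} \<inter> (\<lambda>i. c (i, 0)) ` {1..d} = {}"
  using assms unfolding proper_type_I_def sym_arcs_star_iff by fastforce

lemma digraph_aut_star_transpose:
  assumes "i \<in> {1..d}" "j \<in> {1..d}"
  shows "digraph_aut (star_V d) (sym_arcs (star_V d) (star_E d)) (transpose i j)"
  using assms unfolding digraph_aut_def sym_arcs_star_iff
  by (auto simp: star_V_def transpose_def)

lemma inj_on_star_leaf_colours: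
  assumes "distinguishing (star_V d) (sym_arcs (star_V d) (star_E d)) c"
  shows "inj_on (\<lambda>i. (c (0, i), c (i, 0))) {1..d}"
proof (rule inj_onI, rule ccontr)
  fix i j
  assume leaves: "i \<in> {1..d}" "j \<in> {1..d}"
    and same: "(c (0, i), c (i, 0)) = (c (0, j), c (j, 0))" and "i \<noteq> j"
  have "\<forall>a\<in>sym_arcs (star_V d) (star_E d). c (transpose i j (fst a), transpose i j (snd a)) = c a"
    using leaves same by (auto simp: sym_arcs_star_iff transpose_def)
  with assms digraph_aut_star_transpose[OF leaves] have "\<forall>x\<in>star_V d. transpose i j x = x"
    unfolding distinguishing_def by blast
  moreover have "i \<in> star_V d" using leaves by (simp add: star_V_def)
  ultimately have "transpose i j i = i" by blast
  with \<open>i \<noteq> j\<close> show False by simp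
qed

lemma D12_colouring_star_bound:
  assumes "D12_colouring (star_V d) (star_E d) k c"
  shows "4 * d \<le> k\<^sup>2"
proof -
  define Out where "Out = (\<lambda>i. c (0, i)) ` {1..d}"
  define In where "In = (\<lambda>i. c (i, 0)) ` {1..d}"
  have "Out \<union> In \<subseteq> {..<k}"
    using assms by (auto simp: D12_colouring_def sym_arcs_star_iff Out_def In_def)
  moreover have "Out \<inter> In = {}"
    using assms star_out_in_colours_disjoint by (simp add: D12_colouring_def Out_def In_def)
  ultimately have colours: "card Out + card In \<le> k"
    using card_mono[of "{..<k}" "Out \<union> In"] by (simp add: Out_def In_def card_Un_disjoint)
  have "(\<lambda>i. (c (0, i), c (i, 0))) ` {1..d} \<subseteq> Out \<times> In"
    by (auto simp: Out_def In_def)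
  moreover have "inj_on (\<lambda>i. (c (0, i), c (i, 0))) {1..d}"
    using assms inj_on_star_leaf_colours by (simp add: D12_colouring_def)
  ultimately have "card {1..d} \<le> card (Out \<times> In)"
    by (intro card_inj_on_le) (auto simp: Out_def In_def)
  then have "d \<le> card Out * card In"
    by (simp add: card_cartesian_product)
  then have "4 * d \<le> 4 * (card Out * card In)" by simp
  also have "\<dots> \<le> (card Out + card In)\<^sup>2" by (rule four_mul_le_square_sum)
  also have "\<dots> \<le> k\<^sup>2" using colours by (simp add: power_mono)
  finally show ?thesis .
qed

definition star_colouring :: "nat \<Rightarrow> nat \<times> nat \<Rightarrow> nat" where
  "star_colouring a = (\<lambda>(u, v). if u = 0 then (v - 1) mod a else a + (u - 1) div a)"

lemma star_colouring_out [simp]: "star_colouring a (0, v) = (v - 1) mod a"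
  by (simp add: star_colouring_def)

lemma star_colouring_in [simp]: "u \<noteq> 0 \<Longrightarrow> star_colouring a (u, v) = a + (u - 1) div a"
  by (simp add: star_colouring_def)

lemma star_colouring_out_less: "0 < a \<Longrightarrow> star_colouring a (0, v) < a"
  by simp

lemma star_colouring_in_ge: "u \<noteq> 0 \<Longrightarrow> a \<le> star_colouring a (u, v)"
  by simp

lemma star_colouring_less:
  assumes "0 < a" "d \<le> a * b" "x \<in> sym_arcs (star_V d) (star_E d)"
  shows "star_colouring a x < a + b"
proof -
  obtain u v where x: "x = (u, v)" by fastforce
  have "u - 1 < a * b" if "u \<in> {1..d}" using that assms(2) by auto
  then have "(u - 1) div a < b" if "u \<in> {1..d}"
    using that assms(1) by (simp add: div_less_iff_less_mult mult.commute)
  moreover have "star_colouring a (0, v) < a" using assms(1) by (rule star_colouring_out_less)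
  ultimately show ?thesis
    using assms(3) x by (auto simp: sym_arcs_star_iff)
qed

lemma proper_type_I_star_colouring:
  assumes "0 < a"
  shows "proper_type_I (sym_arcs (star_V d) (star_E d)) (star_colouring a)"
  unfolding proper_type_I_def sym_arcs_star_iff
  using star_colouring_out_less[OF assms] star_colouring_in_ge
  by (metis atLeastAtMost_iff less_le_not_le not_one_le_zero)

lemma distinguishing_star_colouring:
  assumes "0 < a"
  shows "distinguishing (star_V d) (sym_arcs (star_V d) (star_E d)) (star_colouring a)"
  unfolding distinguishing_def
proof (intro allI impI ballI)
  fix f x
  assume "digraph_aut (star_V d) (sym_arcs (star_V d) (star_E d)) f \<and>
    (\<forall>e\<in>sym_arcs (star_V d) (star_E d). star_colouring a (f (fst e), f (snd e)) = star_colouring a e)"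
    and x: "x \<in> star_V d"
  then have bij: "bij_betw f (star_V d) (star_V d)"
    and keeps: "\<And>u v. (u, v) \<in> sym_arcs (star_V d) (star_E d) \<Longrightarrow>
      star_colouring a (f u, f v) = star_colouring a (u, v)"
    unfolding digraph_aut_def by fastforce+
  have centre: "f 0 = 0"
  proof (rule ccontr)
    assume "f 0 \<noteq> 0"
    moreover have "f 0 \<in> star_V d" using bij by (auto simp: star_V_def bij_betw_def)
    ultimately have "1 \<le> d" by (simp add: star_V_def)
    then have "(0, 1) \<in> sym_arcs (star_V d) (star_E d)" by (simp add: sym_arcs_star_iff)
    from keeps[OF this] \<open>f 0 \<noteq> 0\<close> assms show False by simp
  qed
  show "f x = x"
  proof (cases "x = 0")
    case False
    then have leaf: "x \<in> {1..d}" using x by (auto simp: star_V_def)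
    have "0 \<in> star_V d" by (simp add: star_V_def)
    then have "f x \<noteq> 0"
      using inj_onD[OF bij_betw_imp_inj_on[OF bij] _ x] False centre by metis
    have "(f x - 1) mod a = (x - 1) mod a"
      using keeps[of 0 x] leaf centre by (simp add: sym_arcs_star_iff)
    moreover have "(f x - 1) div a = (x - 1) div a"
      using keeps[of x 0] leaf centre \<open>f x \<noteq> 0\<close> False by (simp add: sym_arcs_star_iff)
    ultimately have "f x - 1 = x - 1" by (metis div_mult_mod_eq)
    with \<open>f x \<noteq> 0\<close> False show ?thesis by simp
  qed (simp add: centre)
qed

lemma D12_colouring_star_colouring:
  assumes "0 < a" "d \<le> a * b"
  shows "D12_colouring (star_V d) (star_E d) (a + b) (star_colouring a)"
  using assms star_colouring_less proper_type_I_star_colouring distinguishing_star_colouring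
  by (simp add: D12_colouring_def)

lemma square_le_four_mul_halves: "k\<^sup>2 \<le> 4 * ((k - k div 2) * (k div 2)) + 1" for k :: nat
proof (cases "even k")
  case True
  then show ?thesis by (auto simp: power2_eq_square elim!: evenE)
next
  case False
  then show ?thesis by (auto simp: power2_eq_square algebra_simps elim!: oddE)
qed

lemma D12_colouring_star_exists_iff:
  assumes "1 \<le> d"
  shows "(\<exists>c. D12_colouring (star_V d) (star_E d) k c) \<longleftrightarrow> 4 * d \<le> k\<^sup>2"
proof
  assume "\<exists>c. D12_colouring (star_V d) (star_E d) k c"
  then show "4 * d \<le> k\<^sup>2" by (blast intro: D12_colouring_star_bound)
next
  assume k: "4 * d \<le> k\<^sup>2"
  define a where "a = k - k div 2"
  have "0 < a" using k assms by (cases "k = 0") (auto simp: a_def)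
  moreover have "d \<le> a * (k div 2)"
    using k square_le_four_mul_halves[of k] by (simp add: a_def)
  ultimately have "D12_colouring (star_V d) (star_E d) (a + k div 2) (star_colouring a)"
    by (rule D12_colouring_star_colouring)
  moreover have "a + k div 2 = k" by (simp add: a_def)
  ultimately show "\<exists>c. D12_colouring (star_V d) (star_E d) k c" by auto
qed

theorem proposition2p4:
  fixes \<Delta> :: nat
  assumes "\<Delta> \<ge> 1"
  shows "int (chi_D12 (star_V \<Delta>) (star_E \<Delta>)) = \<lceil>2 * sqrt (real \<Delta>)\<rceil>"
proof -
  have "chi_D12 (star_V \<Delta>) (star_E \<Delta>) = (LEAST k. \<lceil>2 * sqrt (real \<Delta>)\<rceil> \<le> int k)"
    using assms by (simp add: chi_D12_eq_Least D12_colouring_star_exists_iff ceiling_two_sqrt_le_iff)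
  also have "\<dots> = nat \<lceil>2 * sqrt (real \<Delta>)\<rceil>"
    by (rule Least_int_le_eq_nat)
  finally show ?thesis
    by (simp add: less_le_trans[of "-1" 0])
qed

end
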